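(* Define $a_n=0$ if $n$ is not a power of $2$, $a_1=1$, and $a_{2^k}=-1$ for $k\ge1$. Then $Tf(x)=f(x)-f(2x)-f(4x)-f(8x)-\dots=\sum_na_nf(nx)$ satisfies $\|Tf\|_{L^2}=\sqrt2\,\|f\|_{L^2}$ for all $f\in C_0(0,\infty)$, and hence extends to $\sqrt2$ times a unitary operator on $L^2[0,\infty)$.
   Context: $C_0(0,\infty)$ denotes continuous compactly supported functions on $(0,\infty)$; $L^2=L^2[0,\infty)$ with Lebesgue measure. *)

theory Defs
  imports "HOL-Analysis.Analysis"
begin

definition coef :: "nat \<Rightarrow> complex" where
  "coef n = (if n = 1 then 1 else if (\<exists>k::nat. k \<ge> 1 \<and> n = 2 ^ k) then -1 else 0)"

definition C0pos :: "(real \<Rightarrow> complex) \<Rightarrow> bool" where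
  "C0pos f \<longleftrightarrow> continuous_on {0<..} f \<and>
     (\<exists>K. compact K \<and> K \<subseteq> {0<..} \<and> (\<forall>x. x \<notin> K \<longrightarrow> f x = 0))"

definition L2 :: "(real \<Rightarrow> complex) \<Rightarrow> bool" where
  "L2 f \<longleftrightarrow> set_borel_measurable lebesgue {0..} f \<and>
     set_integrable lebesgue {0..} (\<lambda>x. (cmod (f x))\<^sup>2)"

definition L2norm :: "(real \<Rightarrow> complex) \<Rightarrow> real" where
  "L2norm f = sqrt (LINT x:{0..}|lebesgue. (cmod (f x))\<^sup>2)"

definition ae_eq :: "(real \<Rightarrow> complex) \<Rightarrow> (real \<Rightarrow> complex) \<Rightarrow> bool" where
  "ae_eq f g \<longleftrightarrow> (AE x in lebesgue. x \<in> {0..} \<longrightarrow> f x = g x)"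

definition Top :: "(real \<Rightarrow> complex) \<Rightarrow> real \<Rightarrow> complex" where
  "Top f x = (\<Sum>n. coef (Suc n) * f (real (Suc n) * x))"

text \<open>A unitary operator on L^2[0,infinity) (acting on representatives, modulo a.e. equality):
  maps L^2 into L^2, linear, norm preserving, and onto.\<close>
definition unitary_L2 :: "((real \<Rightarrow> complex) \<Rightarrow> (real \<Rightarrow> complex)) \<Rightarrow> bool" where
  "unitary_L2 U \<longleftrightarrow>
     (\<forall>f. L2 f \<longrightarrow> L2 (U f)) \<and>
     (\<forall>f g. L2 f \<longrightarrow> L2 g \<longrightarrow> ae_eq (U (\<lambda>x. f x + g x)) (\<lambda>x. U f x + U g x)) \<and>
     (\<forall>f c. L2 f \<longrightarrow> ae_eq (U (\<lambda>x. c * f x)) (\<lambda>x. c * U f x)) \<and>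
     (\<forall>f. L2 f \<longrightarrow> L2norm (U f) = L2norm f) \<and>
     (\<forall>g. L2 g \<longrightarrow> (\<exists>f. L2 f \<and> ae_eq (U f) g))"

end

theory Submission
  imports Defs
begin

(* Write  S f x = (\<Sum>k. f (2^(k+1) x))  for the upward dilation series, so that
   T f = f - S f.  All estimates use the squared L^2 norm on [0,\<infinity>), taken as an extended real
   (sqnorm), so that finiteness is part of the statements.
   (1) Dilation scales sqnorm: sqnorm (\<lambda>x. f (c x)) = sqnorm f / c; the parallelogram law holds.
   (2) A dilation series \<Sum> a_k f (l_k x) with |a_k|^2 / l_k = 2^-(k+1) converges absolutely a.e.
       and lies in L^2 (Cauchy-Schwarz with geometric weights).  This covers S f and the downward
       series R g x = \<Sum> 2^-(k+1) g (2^-(k+1) x).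
   (3) u = S f solves u x = f (2x) + u (2x); dilating gives sqnorm (f + u) = 2 sqnorm u, and then
       the parallelogram law gives sqnorm (f - S f) = 2 sqnorm f.
   (4) An L^2 function with h x = h (2x) vanishes a.e., so L^2 solutions of the recurrence in (3)
       are unique.
   (5) U f = (f - S f) / \<surd>2 (f cut off to [0,\<infinity>)) is linear and norm preserving; it is onto,
       since for f = (g - R g) / \<surd>2 uniqueness gives S f = -(g + R g) / \<surd>2, hence U f = g.
   (6) For f \<in> C_0(0,\<infinity>) the series defining T f is the finite sum f - S f, so T f = \<surd>2 U f. *)

definition sqnorm :: "(real \<Rightarrow> complex) \<Rightarrow> ennreal" where
  "sqnorm f = (\<integral>\<^sup>+x. ennreal (indicator {0..} x * (cmod (f x))\<^sup>2) \<partial>lebesgue)"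

definition restrict0 :: "(real \<Rightarrow> complex) \<Rightarrow> real \<Rightarrow> complex" where
  "restrict0 f = (\<lambda>x. indicator {0..} x *\<^sub>R f x)"

definition dil_series ::
    "(nat \<Rightarrow> complex) \<Rightarrow> (nat \<Rightarrow> real) \<Rightarrow> (real \<Rightarrow> complex) \<Rightarrow> real \<Rightarrow> complex" where
  "dil_series a l f x =
     (if summable (\<lambda>k. cmod (a k * f (l k * x))) then (\<Sum>k. a k * f (l k * x)) else 0)"

text \<open>Upward series  S f x = \<Sum> f (2^(k+1) x)  and downward series
  R g x = \<Sum> 2^-(k+1) g (2^-(k+1) x).\<close>
abbreviation up_series :: "(real \<Rightarrow> complex) \<Rightarrow> real \<Rightarrow> complex" where
  "up_series \<equiv> dil_series (\<lambda>_. 1) (\<lambda>k. 2 ^ Suc k)"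

abbreviation down_series :: "(real \<Rightarrow> complex) \<Rightarrow> real \<Rightarrow> complex" where
  "down_series \<equiv> dil_series (\<lambda>k. complex_of_real (1 / 2 ^ Suc k)) (\<lambda>k. 1 / 2 ^ Suc k)"

definition sqrt2 :: complex where "sqrt2 = complex_of_real (sqrt 2)"

definition Uop :: "(real \<Rightarrow> complex) \<Rightarrow> real \<Rightarrow> complex" where
  "Uop f x = (restrict0 f x - up_series (restrict0 f) x) / sqrt2"


text \<open>Measurability and dilation of Lebesgue integrals.\<close>

text \<open>Lets the measurability prover handle indicator {0..} x as a function on the Lebesgue space.\<close>
lemma measurable_ident_lebesgue[measurable]: "(\<lambda>x::real. x) \<in> borel_measurable lebesgue"
  by (rule measurable_completion) simp

lemma measurable_dilate:
  fixes f :: "real \<Rightarrow> 'b::topological_space"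
  assumes "f \<in> borel_measurable lebesgue"
  shows "(\<lambda>x. f (c * x)) \<in> borel_measurable lebesgue"
  using measurable_compose[OF lebesgue_measurable_scaling assms, of c] by simp

lemma nn_integral_dilate:
  fixes H :: "real \<Rightarrow> ennreal"
  assumes H: "H \<in> borel_measurable lebesgue" and c: "c > 0"
  shows "(\<integral>\<^sup>+x. H (c * x) \<partial>lebesgue) = ennreal (1/c) * (\<integral>\<^sup>+x. H x \<partial>lebesgue)"
proof -
  have "(\<integral>\<^sup>+x. H x \<partial>lebesgue) = ennreal c * (\<integral>\<^sup>+x. H (c * x) \<partial>lebesgue)"
    using nn_integral_real_affine_lebesgue[OF H, of c 0] c by simp
  then have "ennreal (1/c) * (\<integral>\<^sup>+x. H x \<partial>lebesgue)
      = ennreal (1/c) * ennreal c * (\<integral>\<^sup>+x. H (c * x) \<partial>lebesgue)"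
    by (simp add: mult.assoc)
  also have "ennreal (1/c) * ennreal c = 1" using c by (simp flip: ennreal_mult)
  finally show ?thesis by simp
qed

lemma ennreal_half_double: "ennreal (1/2) * (2 * X) = X"
proof -
  have "ennreal (1/2) * ennreal 2 = ennreal ((1/2) * 2)" by (rule ennreal_mult[symmetric]) auto
  then have "ennreal (1/2) * 2 = 1" by (simp only: ennreal_numeral) simp
  then show ?thesis by (simp only: mult.assoc[symmetric]) simp
qed


text \<open>Basic properties of the squared norm.\<close>

lemma sqnorm_integrand_measurable:
  fixes f :: "real \<Rightarrow> complex"
  assumes "f \<in> borel_measurable lebesgue"
  shows "(\<lambda>x. ennreal (indicator {0..} x * (cmod (f x))\<^sup>2)) \<in> borel_measurable lebesgue"
  using assms by measurable

lemma sqnorm_dilate: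
  assumes f: "f \<in> borel_measurable lebesgue" and c: "c > 0"
  shows "sqnorm (\<lambda>x. f (c * x)) = ennreal (1/c) * sqnorm f"
proof -
  have "indicator {0..} (c * x) = (indicator {0..} x :: real)" for x
    using c by (auto simp: indicator_def zero_le_mult_iff)
  then have "sqnorm (\<lambda>x. f (c * x))
      = (\<integral>\<^sup>+x. ennreal (indicator {0..} (c * x) * (cmod (f (c * x)))\<^sup>2) \<partial>lebesgue)"
    unfolding sqnorm_def by simp
  also have "\<dots> = ennreal (1/c) * sqnorm f"
    unfolding sqnorm_def by (rule nn_integral_dilate[OF sqnorm_integrand_measurable[OF f] c])
  finally show ?thesis .
qed

lemma sqnorm_cmult:
  assumes hm: "h \<in> borel_measurable lebesgue"
  shows "sqnorm (\<lambda>x. c * h x) = ennreal ((cmod c)\<^sup>2) * sqnorm h"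
proof -
  have "ennreal (indicator {0..} x * (cmod (c * h x))\<^sup>2)
      = ennreal ((cmod c)\<^sup>2) * ennreal (indicator {0..} x * (cmod (h x))\<^sup>2)" for x
    by (simp add: norm_mult power_mult_distrib mult.left_commute flip: ennreal_mult)
  then have "sqnorm (\<lambda>x. c * h x)
      = (\<integral>\<^sup>+x. ennreal ((cmod c)\<^sup>2) * ennreal (indicator {0..} x * (cmod (h x))\<^sup>2) \<partial>lebesgue)"
    unfolding sqnorm_def by simp
  also have "\<dots> = ennreal ((cmod c)\<^sup>2) * sqnorm h"
    unfolding sqnorm_def by (rule nn_integral_cmult[OF sqnorm_integrand_measurable[OF hm]])
  finally show ?thesis .
qed

lemma sqnorm_cmult_finite:
  assumes "h \<in> borel_measurable lebesgue" and "sqnorm h < top"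
  shows "sqnorm (\<lambda>x. c * h x) < top"
  using assms by (simp add: sqnorm_cmult ennreal_mult_less_top)

lemma sqnorm_parallelogram:
  assumes fm: "f \<in> borel_measurable lebesgue" and um: "u \<in> borel_measurable lebesgue"
  shows "sqnorm (\<lambda>x. f x - u x) + sqnorm (\<lambda>x. f x + u x) = 2 * sqnorm f + 2 * sqnorm u"
proof -
  define N :: "(real \<Rightarrow> complex) \<Rightarrow> real \<Rightarrow> ennreal"
    where "N h x = ennreal (indicator {0..} x * (cmod (h x))\<^sup>2)" for h x
  have Nm: "N h \<in> borel_measurable lebesgue" if "h \<in> borel_measurable lebesgue" for h
    unfolding N_def[abs_def] by (rule sqnorm_integrand_measurable[OF that])
  have dm: "(\<lambda>x. f x - u x) \<in> borel_measurable lebesgue"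
    and sm: "(\<lambda>x. f x + u x) \<in> borel_measurable lebesgue" using fm um by measurable
  have pointwise: "N (\<lambda>x. f x - u x) x + N (\<lambda>x. f x + u x) x = 2 * N f x + 2 * N u x" for x
  proof -
    define i where "i = (indicator {0..} x :: real)"
    have par: "(cmod (f x - u x))\<^sup>2 + (cmod (f x + u x))\<^sup>2
        = 2 * (cmod (f x))\<^sup>2 + 2 * (cmod (u x))\<^sup>2"
      unfolding cmod_power2 by (simp add: power2_eq_square algebra_simps)
    have "i * (cmod (f x - u x))\<^sup>2 + i * (cmod (f x + u x))\<^sup>2
        = i * ((cmod (f x - u x))\<^sup>2 + (cmod (f x + u x))\<^sup>2)"
      by (rule distrib_left[symmetric])
    also have "\<dots> = 2 * (i * (cmod (f x))\<^sup>2) + 2 * (i * (cmod (u x))\<^sup>2)"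
      by (simp only: par distrib_left mult.left_commute)
    finally have "i * (cmod (f x - u x))\<^sup>2 + i * (cmod (f x + u x))\<^sup>2
        = 2 * (i * (cmod (f x))\<^sup>2) + 2 * (i * (cmod (u x))\<^sup>2)" .
    moreover have "i \<ge> 0" unfolding i_def by simp
    ultimately show ?thesis
      unfolding N_def i_def[symmetric] by (simp flip: ennreal_plus ennreal_numeral ennreal_mult)
  qed
  have "sqnorm (\<lambda>x. f x - u x) + sqnorm (\<lambda>x. f x + u x)
      = (\<integral>\<^sup>+x. N (\<lambda>x. f x - u x) x + N (\<lambda>x. f x + u x) x \<partial>lebesgue)"
    unfolding sqnorm_def N_def by (rule nn_integral_add[symmetric]) (use dm sm in measurable)
  also have "\<dots> = (\<integral>\<^sup>+x. 2 * N f x + 2 * N u x \<partial>lebesgue)" by (simp only: pointwise)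
  also have "\<dots> = (\<integral>\<^sup>+x. 2 * N f x \<partial>lebesgue) + (\<integral>\<^sup>+x. 2 * N u x \<partial>lebesgue)"
    by (rule nn_integral_add) (use Nm[OF fm] Nm[OF um] in measurable)
  also have "\<dots> = 2 * sqnorm f + 2 * sqnorm u"
    by (simp only: nn_integral_cmult[OF Nm[OF fm]] nn_integral_cmult[OF Nm[OF um]])
       (unfold sqnorm_def N_def, rule refl)
  finally show ?thesis .
qed

text \<open>L^2 is closed under sums and differences (both are bounded by the parallelogram law).\<close>
lemma sqnorm_add_diff_finite:
  assumes am: "a \<in> borel_measurable lebesgue" and bm: "b \<in> borel_measurable lebesgue"
    and fin: "sqnorm a < top" "sqnorm b < top"
  shows "sqnorm (\<lambda>x. a x + b x) < top" and "sqnorm (\<lambda>x. a x - b x) < top"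
proof -
  have "sqnorm (\<lambda>x. a x - b x) + sqnorm (\<lambda>x. a x + b x) < top"
    using fin by (simp add: sqnorm_parallelogram[OF am bm] ennreal_mult_less_top)
  then show "sqnorm (\<lambda>x. a x + b x) < top" "sqnorm (\<lambda>x. a x - b x) < top"
    by (auto simp: less_top)
qed


text \<open>Relating sqnorm to the L^2 notions of the statement.\<close>

lemma restrict0_sq: "(cmod (restrict0 f x))\<^sup>2 = indicator {0..} x * (cmod (f x))\<^sup>2"
  by (simp add: restrict0_def indicator_def)

lemma restrict0_nonneg: "x \<ge> 0 \<Longrightarrow> restrict0 f x = f x"
  by (simp add: restrict0_def)

lemma sqnorm_restrict0: "sqnorm (restrict0 f) = sqnorm f"
  unfolding sqnorm_def restrict0_sq by (intro nn_integral_cong) (auto simp: indicator_def)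

lemma measurable_restrict0:
  "g \<in> borel_measurable lebesgue \<Longrightarrow> restrict0 g \<in> borel_measurable lebesgue"
  unfolding restrict0_def by measurable

lemma L2_iff: "L2 f \<longleftrightarrow> restrict0 f \<in> borel_measurable lebesgue \<and> sqnorm f < top"
proof -
  have restr: "(\<lambda>x. indicator {0..} x *\<^sub>R (cmod (f x))\<^sup>2) = (\<lambda>x. (cmod (restrict0 f x))\<^sup>2)"
    by (auto simp: restrict0_def indicator_def)
  have nn: "(\<integral>\<^sup>+x. ennreal (norm ((cmod (restrict0 f x))\<^sup>2)) \<partial>lebesgue) = sqnorm f"
    unfolding sqnorm_def by (simp add: restrict0_sq)
  have "L2 f \<longleftrightarrow> restrict0 f \<in> borel_measurable lebesgue
      \<and> integrable lebesgue (\<lambda>x. (cmod (restrict0 f x))\<^sup>2)"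
    unfolding L2_def set_borel_measurable_def set_integrable_def restr restrict0_def ..
  also have "\<dots> \<longleftrightarrow> restrict0 f \<in> borel_measurable lebesgue \<and> sqnorm f < top"
  proof (rule conj_cong[OF refl])
    assume "restrict0 f \<in> borel_measurable lebesgue"
    then have "(\<lambda>x. (cmod (restrict0 f x))\<^sup>2) \<in> borel_measurable lebesgue" by measurable
    then show "integrable lebesgue (\<lambda>x. (cmod (restrict0 f x))\<^sup>2) \<longleftrightarrow> sqnorm f < top"
      unfolding integrable_iff_bounded nn by (simp add: infinity_ennreal_def)
  qed
  finally show ?thesis .
qed

lemma L2norm_eq:
  assumes "restrict0 f \<in> borel_measurable lebesgue"
  shows "L2norm f = sqrt (enn2real (sqnorm f))"
proof -
  have restr: "(\<lambda>x. indicator {0..} x *\<^sub>R (cmod (f x))\<^sup>2) = (\<lambda>x. (cmod (restrict0 f x))\<^sup>2)"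
    by (auto simp: restrict0_def indicator_def)
  have m: "(\<lambda>x. (cmod (restrict0 f x))\<^sup>2) \<in> borel_measurable lebesgue" using assms by measurable
  show ?thesis
    unfolding L2norm_def set_lebesgue_integral_def restr sqnorm_def
    by (subst integral_eq_nn_integral[OF m]) (auto simp: restrict0_sq)
qed

lemma L2norm_cong: "(\<And>x. x \<ge> 0 \<Longrightarrow> p x = q x) \<Longrightarrow> L2norm p = L2norm q"
proof -
  assume "\<And>x. x \<ge> 0 \<Longrightarrow> p x = q x"
  then have "(\<lambda>x. indicator {0..} x *\<^sub>R (cmod (p x))\<^sup>2) = (\<lambda>x. indicator {0..} x *\<^sub>R (cmod (q x))\<^sup>2)"
    by (auto simp: indicator_def)
  then show ?thesis unfolding L2norm_def set_lebesgue_integral_def by simp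
qed


text \<open>Cauchy-Schwarz with the geometric weights (3/4)^k, whose sum is 4:
  (\<Sum> c_k)^2 \<le> 4 \<Sum> c_k^2 / (3/4)^k for nonnegative c.\<close>
lemma weighted_Cauchy_Schwarz:
  fixes c :: "nat \<Rightarrow> real"
  assumes c0: "\<And>k. c k \<ge> 0"
    and fin: "(\<Sum>k. ennreal ((c k)\<^sup>2 / (3/4)^k)) \<noteq> top"
  shows "summable c \<and> ennreal ((suminf c)\<^sup>2) \<le> 4 * (\<Sum>k. ennreal ((c k)\<^sup>2 / (3/4)^k))"
proof -
  define w :: "nat \<Rightarrow> real" where "w k = (3/4)^k" for k
  have w0: "w k > 0" for k by (simp add: w_def)
  have sq: "summable (\<lambda>k. (c k)\<^sup>2 / w k)"
    using fin by (intro summable_suminf_not_top) (auto simp: w_def)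
  define s where "s = (\<Sum>k. (c k)\<^sup>2 / w k)"
  have s0: "s \<ge> 0"
    unfolding s_def using sq w0 by (intro suminf_nonneg) (auto intro: divide_nonneg_pos)
  have eqs: "(\<Sum>k. ennreal ((c k)\<^sup>2 / (3/4)^k)) = ennreal s"
    unfolding s_def using sq w0 by (subst suminf_ennreal2) (auto simp: w_def)
  have ws: "summable w" unfolding w_def by (rule summable_geometric) simp
  have wsum: "suminf w = 4" unfolding w_def by (subst suminf_geometric) auto
  have partial: "(\<Sum>k<n. c k) \<le> 2 * sqrt s" for n
  proof -
    have "sqrt (w k) * (c k / sqrt (w k)) = c k" for k using w0[of k] by simp
    then have "(\<Sum>k<n. c k)\<^sup>2 = (\<Sum>k<n. sqrt (w k) * (c k / sqrt (w k)))\<^sup>2" by simp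
    also have "\<dots> \<le> (\<Sum>k<n. (sqrt (w k))\<^sup>2) * (\<Sum>k<n. (c k / sqrt (w k))\<^sup>2)"
      by (rule Cauchy_Schwarz_ineq_sum)
    also have "\<dots> = (\<Sum>k<n. w k) * (\<Sum>k<n. (c k)\<^sup>2 / w k)"
      using w0 by (simp add: less_imp_le power_divide)
    also have "\<dots> \<le> 4 * s"
    proof (rule mult_mono)
      show "(\<Sum>k<n. w k) \<le> 4"
        using wsum ws w0 sum_le_suminf[of w "{..<n}"] by (auto simp: less_imp_le)
      show "(\<Sum>k<n. (c k)\<^sup>2 / w k) \<le> s"
        unfolding s_def using sq w0 by (intro sum_le_suminf) (auto simp: less_imp_le)
    qed (use w0 in \<open>auto intro!: sum_nonneg simp: less_imp_le\<close>)
    finally have "(\<Sum>k<n. c k)\<^sup>2 \<le> (2 * sqrt s)\<^sup>2" using s0 by (simp add: power_mult_distrib)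
    moreover have "0 \<le> 2 * sqrt s" using s0 by simp
    ultimately show ?thesis by (rule power2_le_imp_le)
  qed
  have sc: "summable c" by (rule summableI_nonneg_bounded[OF c0 partial])
  have "suminf c \<le> 2 * sqrt s" by (rule suminf_le_const[OF sc partial])
  moreover have "suminf c \<ge> 0" by (rule suminf_nonneg[OF sc c0])
  ultimately have "(suminf c)\<^sup>2 \<le> (2 * sqrt s)\<^sup>2" by (rule power_mono)
  also have "\<dots> = 4 * s" using s0 by (simp add: power_mult_distrib)
  finally have "ennreal ((suminf c)\<^sup>2) \<le> ennreal (4 * s)" by (rule ennreal_leI)
  then show ?thesis using sc eqs s0 by (simp add: ennreal_mult)
qed


text \<open>General facts about dilation series.\<close>

text \<open>Measurability: the set of absolute convergence is measurable, and the series is a pointwise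
  limit of measurable partial sums.\<close>
lemma dil_series_measurable:
  assumes f: "f \<in> borel_measurable lebesgue"
  shows "dil_series a l f \<in> borel_measurable lebesgue"
proof -
  define P where "P x = summable (\<lambda>k. cmod (a k * f (l k * x)))" for x
  have fm: "(\<lambda>x. f (l k * x)) \<in> borel_measurable lebesgue" for k by (rule measurable_dilate[OF f])
  have Peq: "P x \<longleftrightarrow> (\<Sum>k. ennreal (cmod (a k * f (l k * x)))) \<noteq> top" for x
  proof
    assume "P x" then show "(\<Sum>k. ennreal (cmod (a k * f (l k * x)))) \<noteq> top"
      unfolding P_def by (subst suminf_ennreal2) auto
  next
    assume "(\<Sum>k. ennreal (cmod (a k * f (l k * x)))) \<noteq> top"
    then show "P x" unfolding P_def by (intro summable_suminf_not_top) auto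
  qed
  have Pm: "Measurable.pred lebesgue P" unfolding Peq using fm by measurable
  define F where "F n x = (if P x then (\<Sum>k<n. a k * f (l k * x)) else 0)" for n x
  have Fm: "F n \<in> borel_measurable lebesgue" for n
    unfolding F_def using Pm fm by measurable
  show ?thesis
  proof (rule borel_measurable_LIMSEQ_metric[OF Fm])
    fix x
    show "(\<lambda>n. F n x) \<longlonglongrightarrow> dil_series a l f x"
    proof (cases "P x")
      case True
      then have "summable (\<lambda>k. a k * f (l k * x))" unfolding P_def by (rule summable_norm_cancel)
      then show ?thesis using True unfolding F_def dil_series_def P_def
        by (simp add: summable_LIMSEQ)
    next
      case False then show ?thesis unfolding F_def dil_series_def P_def by simp
    qed
  qed
qed

lemma dil_series_cong_nonneg:
  assumes "\<And>y. y \<ge> 0 \<Longrightarrow> p y = q y" and "\<And>k. l k > 0" and "x \<ge> 0"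
  shows "dil_series a l p x = dil_series a l q x"
proof -
  have "p (l k * x) = q (l k * x)" for k
    using assms by (intro assms(1)) (simp add: less_imp_le)
  then show ?thesis unfolding dil_series_def by simp
qed

lemma dil_series_add:
  assumes sp: "summable (\<lambda>k. cmod (a k * p (l k * x)))"
    and sq: "summable (\<lambda>k. cmod (a k * q (l k * x)))"
  shows "dil_series a l (\<lambda>y. p y + q y) x = dil_series a l p x + dil_series a l q x"
proof -
  have s: "summable (\<lambda>k. cmod (a k * (p (l k * x) + q (l k * x))))"
  proof (rule summable_comparison_test)
    show "\<exists>N. \<forall>n\<ge>N. norm (cmod (a n * (p (l n * x) + q (l n * x))))
        \<le> cmod (a n * p (l n * x)) + cmod (a n * q (l n * x))"
      by (auto simp: distrib_left norm_triangle_ineq)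
    show "summable (\<lambda>n. cmod (a n * p (l n * x)) + cmod (a n * q (l n * x)))"
      using sp sq by (rule summable_add)
  qed
  have "(\<Sum>k. a k * (p (l k * x) + q (l k * x)))
      = (\<Sum>k. a k * p (l k * x)) + (\<Sum>k. a k * q (l k * x))"
    using summable_norm_cancel[OF sp] summable_norm_cancel[OF sq]
    by (simp add: distrib_left suminf_add)
  then show ?thesis using s sp sq unfolding dil_series_def by simp
qed

lemma dil_series_cmult:
  assumes sp: "summable (\<lambda>k. cmod (a k * p (l k * x)))"
  shows "dil_series a l (\<lambda>y. c * p y) x = c * dil_series a l p x"
proof -
  have s: "summable (\<lambda>k. cmod (a k * (c * p (l k * x))))"
    using summable_mult[OF sp, of "cmod c"] by (simp add: norm_mult mult.left_commute)
  have "(\<Sum>k. a k * (c * p (l k * x))) = c * (\<Sum>k. a k * p (l k * x))"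
    using suminf_mult[OF summable_norm_cancel[OF sp], of c] by (simp add: mult.left_commute)
  then show ?thesis using s sp unfolding dil_series_def by simp
qed

lemma sqnorm_weighted_term:
  assumes fm: "f \<in> borel_measurable lebesgue" and lpos: "l > 0"
    and al: "(cmod a)\<^sup>2 / l = (1/2)^Suc k"
  shows "(\<integral>\<^sup>+x. ennreal (indicator {0..} x * (cmod (a * f (l * x)))\<^sup>2 / (3/4)^k) \<partial>lebesgue)
    = ennreal ((1/2) * (2/3)^k) * sqnorm f"
proof -
  have flm: "(\<lambda>x. f (l * x)) \<in> borel_measurable lebesgue" by (rule measurable_dilate[OF fm])
  have "(\<integral>\<^sup>+x. ennreal (indicator {0..} x * (cmod (a * f (l * x)))\<^sup>2 / (3/4)^k) \<partial>lebesgue)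
      = (\<integral>\<^sup>+x. ennreal ((cmod a)\<^sup>2 / (3/4)^k)
            * ennreal (indicator {0..} x * (cmod (f (l * x)))\<^sup>2) \<partial>lebesgue)"
    by (intro nn_integral_cong) (simp add: norm_mult power_mult_distrib ennreal_mult'[symmetric])
  also have "\<dots> = ennreal ((cmod a)\<^sup>2 / (3/4)^k) * sqnorm (\<lambda>x. f (l * x))"
    unfolding sqnorm_def by (rule nn_integral_cmult[OF sqnorm_integrand_measurable[OF flm]])
  also have "\<dots> = ennreal ((cmod a)\<^sup>2 / (3/4)^k) * ennreal (1 / l) * sqnorm f"
    by (simp add: sqnorm_dilate[OF fm lpos] mult.assoc)
  also have "ennreal ((cmod a)\<^sup>2 / (3/4)^k) * ennreal (1 / l) = ennreal ((cmod a)\<^sup>2 / l / (3/4)^k)"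
    using lpos by (simp flip: ennreal_mult)
  also have "(cmod a)\<^sup>2 / l / (3/4)^k = (1/2) * (2/3)^k"
    unfolding al by (simp add: field_simps power_divide flip: power_mult_distrib)
  finally show ?thesis .
qed

lemma weighted_terms_integral:
  assumes fm: "f \<in> borel_measurable lebesgue"
    and lpos: "\<And>k. l k > 0" and al: "\<And>k. (cmod (a k))\<^sup>2 / l k = (1/2)^Suc k"
  shows "(\<integral>\<^sup>+x. (\<Sum>k. ennreal (indicator {0..} x * (cmod (a k * f (l k * x)))\<^sup>2 / (3/4)^k)) \<partial>lebesgue)
    = ennreal (3/2) * sqnorm f"
proof -
  have termm: "(\<lambda>x. ennreal (indicator {0..} x * (cmod (a k * f (l k * x)))\<^sup>2 / (3/4)^k))
      \<in> borel_measurable lebesgue" for k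
    using measurable_dilate[OF fm, of "l k"] by measurable
  have term_integral:
    "(\<integral>\<^sup>+x. ennreal (indicator {0..} x * (cmod (a k * f (l k * x)))\<^sup>2 / (3/4)^k) \<partial>lebesgue)
      = ennreal ((1/2) * (2/3)^k) * sqnorm f" for k
    by (rule sqnorm_weighted_term[OF fm lpos al])
  have geo: "(\<Sum>k. ennreal ((1/2) * (2/3::real)^k)) = ennreal (3/2)"
  proof -
    have "(\<Sum>k. (2/3::real)^k) = 3" by (subst suminf_geometric) simp_all
    then have "(\<Sum>k. (1/2) * (2/3::real)^k) = 3/2"
      using suminf_mult[OF summable_geometric[of "2/3::real"], of "1/2"] by simp
    moreover have "summable (\<lambda>k. (1/2) * (2/3::real)^k)"
      by (intro summable_mult summable_geometric) simp
    ultimately show ?thesis by (subst suminf_ennreal2) auto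
  qed
  show ?thesis
    using termm by (subst nn_integral_suminf) (auto simp: term_integral geo[simplified])
qed

lemma dil_series_L2:
  fixes f :: "real \<Rightarrow> complex"
  assumes fm: "f \<in> borel_measurable lebesgue" and Nf: "sqnorm f < top"
    and lpos: "\<And>k. l k > 0" and al: "\<And>k. (cmod (a k))\<^sup>2 / l k = (1/2)^Suc k"
  shows "(AE x in lebesgue. x \<ge> 0 \<longrightarrow> summable (\<lambda>k. cmod (a k * f (l k * x))))
    \<and> sqnorm (dil_series a l f) < top"
proof -
  define t where "t k x = cmod (a k * f (l k * x))" for k x
  define B where "B x = (\<Sum>k. ennreal (indicator {0..} x * (t k x)\<^sup>2 / (3/4)^k))" for x
  have "(\<lambda>x. ennreal (indicator {0..} x * (t k x)\<^sup>2 / (3/4)^k)) \<in> borel_measurable lebesgue"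
    for k unfolding t_def using measurable_dilate[OF fm, of "l k"] by measurable
  then have Bm: "B \<in> borel_measurable lebesgue" unfolding B_def by measurable
  have "(\<integral>\<^sup>+x. B x \<partial>lebesgue) = ennreal (3/2) * sqnorm f"
    unfolding B_def t_def by (rule weighted_terms_integral[OF fm lpos al])
  then have Bfin: "(\<integral>\<^sup>+x. B x \<partial>lebesgue) \<noteq> top"
    using Nf by (simp add: ennreal_mult_eq_top_iff)
  have AEB: "AE x in lebesgue. B x \<noteq> top"
    using nn_integral_PInf_AE[of B lebesgue] Bm Bfin by (simp add: infinity_ennreal_def)
  have pointwise: "summable (\<lambda>k. t k x) \<and> ennreal ((suminf (\<lambda>k. t k x))\<^sup>2) \<le> 4 * B x"
    if "x \<ge> 0" "B x \<noteq> top" for x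
  proof -
    have "(\<Sum>k. ennreal ((t k x)\<^sup>2 / (3/4)^k)) = B x" using that(1) unfolding B_def by simp
    moreover have "\<And>k. 0 \<le> t k x" by (simp add: t_def)
    ultimately show ?thesis using weighted_Cauchy_Schwarz[of "\<lambda>k. t k x"] that(2) by simp
  qed
  have AE1: "AE x in lebesgue. x \<ge> 0 \<longrightarrow> summable (\<lambda>k. cmod (a k * f (l k * x)))"
    using AEB by eventually_elim (use pointwise in \<open>auto simp: t_def\<close>)
  have bound: "ennreal (indicator {0..} x * (cmod (dil_series a l f x))\<^sup>2) \<le> 4 * B x"
    if "B x \<noteq> top" for x
  proof (cases "x \<ge> 0")
    case True
    from pointwise[OF True that] have st: "summable (\<lambda>k. t k x)"
      and le: "ennreal ((suminf (\<lambda>k. t k x))\<^sup>2) \<le> 4 * B x" by auto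
    have "dil_series a l f x = (\<Sum>k. a k * f (l k * x))"
      using st unfolding dil_series_def t_def by simp
    then have "cmod (dil_series a l f x) \<le> suminf (\<lambda>k. t k x)"
      using summable_norm[of "\<lambda>k. a k * f (l k * x)"] st unfolding t_def by simp
    then have "(cmod (dil_series a l f x))\<^sup>2 \<le> (suminf (\<lambda>k. t k x))\<^sup>2"
      by (intro power_mono) auto
    then have "ennreal (indicator {0..} x * (cmod (dil_series a l f x))\<^sup>2)
        \<le> ennreal ((suminf (\<lambda>k. t k x))\<^sup>2)"
      using True by (intro ennreal_leI) simp
    then show ?thesis using le by (rule order_trans)
  qed simp
  have "sqnorm (dil_series a l f) \<le> (\<integral>\<^sup>+x. 4 * B x \<partial>lebesgue)"
    unfolding sqnorm_def using AEB by (intro nn_integral_mono_AE) (auto elim!: eventually_mono intro: bound)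
  also have "\<dots> = 4 * (\<integral>\<^sup>+x. B x \<partial>lebesgue)" using Bm by (rule nn_integral_cmult)
  also have "\<dots> < top" using Bfin by (simp add: ennreal_mult_less_top less_top)
  finally show ?thesis using AE1 by simp
qed


text \<open>The upward and downward series.\<close>

text \<open>Both satisfy |a_k|^2 / l_k = 2^-(k+1), so the main estimate applies.\<close>
lemma up_series_L2:
  assumes fm: "f \<in> borel_measurable lebesgue" and Nf: "sqnorm f < top"
  shows "(AE x in lebesgue. x \<ge> 0 \<longrightarrow> summable (\<lambda>k. cmod (1 * f (2 ^ Suc k * x))))
    \<and> sqnorm (up_series f) < top"
  by (rule dil_series_L2[OF fm Nf]) (simp_all add: power_one_over)

lemma down_series_L2:
  assumes fm: "f \<in> borel_measurable lebesgue" and Nf: "sqnorm f < top"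
  shows "(AE x in lebesgue. x \<ge> 0 \<longrightarrow>
      summable (\<lambda>k. cmod (complex_of_real (1 / 2 ^ Suc k) * f (1 / 2 ^ Suc k * x))))
    \<and> sqnorm (down_series f) < top"
  by (rule dil_series_L2[OF fm Nf])
     (simp_all add: power_one_over power2_eq_square norm_divide norm_mult norm_power)

lemma up_series_rec:
  assumes s: "summable (\<lambda>k. cmod (1 * f (2 ^ Suc k * x)))"
  shows "up_series f x = f (2 * x) + up_series f (2 * x)"
proof -
  define t where "t k = f (2 ^ Suc k * x)" for k
  have t2: "f (2 ^ Suc k * (2 * x)) = t (Suc k)" for k
    unfolding t_def by (simp add: mult.assoc mult.left_commute)
  have st: "summable (\<lambda>k. cmod (t k))" using s unfolding t_def by simp
  then have st2: "summable (\<lambda>k. cmod (t (Suc k)))"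
    using summable_Suc_iff[of "\<lambda>k. cmod (t k)"] by simp
  have "suminf t = t 0 + (\<Sum>k. t (Suc k))"
    using suminf_split_head[OF summable_norm_cancel[OF st]] by simp
  moreover have "up_series f x = suminf t" using st unfolding dil_series_def t_def by simp
  moreover have "up_series f (2 * x) = (\<Sum>k. t (Suc k))" using st2 unfolding dil_series_def t2 by simp
  ultimately show ?thesis by (simp add: t_def)
qed

lemma up_series_rec_ae:
  assumes fm: "f \<in> borel_measurable lebesgue" and Nf: "sqnorm f < top"
  shows "AE x in lebesgue. x \<ge> 0 \<longrightarrow> up_series f x = f (2 * x) + up_series f (2 * x)"
  using conjunct1[OF up_series_L2[OF fm Nf]]
proof eventually_elim
  case (elim x)
  then show ?case using up_series_rec[of f x] by blast
qed

lemma down_series_rec: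
  assumes s: "summable (\<lambda>k. cmod (complex_of_real (1 / 2 ^ Suc k) * g (1 / 2 ^ Suc k * x)))"
  shows "down_series g (2 * x) = g x / 2 + down_series g x / 2"
proof -
  define t where "t k = complex_of_real (1 / 2 ^ Suc k) * g (1 / 2 ^ Suc k * x)" for k
  define t' where "t' k = complex_of_real (1 / 2 ^ Suc k) * g (1 / 2 ^ Suc k * (2 * x))" for k
  have t'S: "t' (Suc k) = t k / 2" for k
    unfolding t_def t'_def by (simp add: field_simps)
  have t'0: "t' 0 = g x / 2" unfolding t'_def by simp
  have st: "summable (\<lambda>k. cmod (t k))" using s unfolding t_def by simp
  have st2: "summable (\<lambda>k. cmod (t' k))"
    unfolding summable_Suc_iff[symmetric, of "\<lambda>k. cmod (t' k)"] t'S
    using summable_divide[OF st, of 2] by (simp add: norm_divide)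
  have "suminf t' = t' 0 + (\<Sum>k. t' (Suc k))"
    using suminf_split_head[OF summable_norm_cancel[OF st2]] by simp
  also have "(\<Sum>k. t' (Suc k)) = (\<Sum>k. t k) / 2" unfolding t'S
    by (rule suminf_divide[OF summable_norm_cancel[OF st]])
  finally have "suminf t' = g x / 2 + suminf t / 2" using t'0 by simp
  moreover have "down_series g (2 * x) = suminf t'" using st2 unfolding dil_series_def t'_def by simp
  moreover have "down_series g x = suminf t" using st unfolding dil_series_def t_def by simp
  ultimately show ?thesis by simp
qed


lemma down_series_rec_ae:
  assumes gm: "g \<in> borel_measurable lebesgue" and Ng: "sqnorm g < top"
  shows "AE x in lebesgue. x \<ge> 0 \<longrightarrow> down_series g (2 * x) = g x / 2 + down_series g x / 2"
  using conjunct1[OF down_series_L2[OF gm Ng]]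
proof eventually_elim
  case (elim x)
  then show ?case using down_series_rec[of g x] by blast
qed


text \<open>Uniqueness: a dilation invariant L^2 function vanishes on [0,\<infinity>), because its squared
  norm equals half of itself.\<close>
lemma dilation_invariant_vanishes:
  assumes hm: "h \<in> borel_measurable lebesgue" and Nh: "sqnorm h < top"
    and inv: "AE x in lebesgue. x \<ge> 0 \<longrightarrow> h x = h (2 * x)"
  shows "AE x in lebesgue. x \<ge> 0 \<longrightarrow> h x = 0"
proof -
  have "sqnorm h = sqnorm (\<lambda>x. h (2 * x))"
    unfolding sqnorm_def using inv by (intro nn_integral_cong_AE) (auto elim!: eventually_mono)
  also have "\<dots> = ennreal (1/2) * sqnorm h" by (rule sqnorm_dilate[OF hm]) simp
  finally have eq: "sqnorm h = ennreal (1/2) * sqnorm h" .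
  obtain r where r: "r \<ge> 0" "sqnorm h = ennreal r" using Nh by (auto simp: less_top_ennreal)
  have "ennreal (1/2) * ennreal r = ennreal (1/2 * r)" by (rule ennreal_mult[symmetric]) (use r in auto)
  then have "ennreal r = ennreal (1/2 * r)" using eq unfolding r(2) by simp
  then have "r = 1/2 * r" using r by (subst (asm) ennreal_inj) auto
  then have "sqnorm h = 0" using r by simp
  then have "AE x in lebesgue. ennreal (indicator {0..} x * (cmod (h x))\<^sup>2) = 0"
    unfolding sqnorm_def using sqnorm_integrand_measurable[OF hm] by (simp add: nn_integral_0_iff_AE)
  then show ?thesis by (auto elim!: eventually_mono)
qed

lemma recurrence_unique:
  assumes um: "u \<in> borel_measurable lebesgue" and Nu: "sqnorm u < top"
    and wm: "w \<in> borel_measurable lebesgue" and Nw: "sqnorm w < top"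
    and ru: "AE x in lebesgue. x \<ge> 0 \<longrightarrow> u x = f (2 * x) + u (2 * x)"
    and rw: "AE x in lebesgue. x \<ge> 0 \<longrightarrow> w x = f (2 * x) + w (2 * x)"
  shows "AE x in lebesgue. x \<ge> 0 \<longrightarrow> u x = w x"
proof -
  have "AE x in lebesgue. x \<ge> 0 \<longrightarrow> u x - w x = 0"
  proof (rule dilation_invariant_vanishes)
    show "(\<lambda>x. u x - w x) \<in> borel_measurable lebesgue" using um wm by measurable
    show "sqnorm (\<lambda>x. u x - w x) < top" by (rule sqnorm_add_diff_finite(2)[OF um wm Nu Nw])
    show "AE x in lebesgue. x \<ge> 0 \<longrightarrow> u x - w x = u (2 * x) - w (2 * x)"
      using ru rw by eventually_elim auto
  qed
  then show ?thesis by (auto elim!: eventually_mono)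
qed


lemma sqnorm_id_minus_up:
  assumes fm: "f \<in> borel_measurable lebesgue" and Nf: "sqnorm f < top"
  shows "sqnorm (\<lambda>x. f x - up_series f x) = 2 * sqnorm f"
proof -
  define u where "u = up_series f"
  have um: "u \<in> borel_measurable lebesgue" unfolding u_def by (rule dil_series_measurable[OF fm])
  have Nu: "sqnorm u < top" using up_series_L2[OF fm Nf] unfolding u_def by auto
  have fum: "(\<lambda>y. f y + u y) \<in> borel_measurable lebesgue" using fm um by measurable
  have "sqnorm u = sqnorm (\<lambda>x. f (2 * x) + u (2 * x))"
    unfolding sqnorm_def u_def using up_series_rec_ae[OF fm Nf]
    by (intro nn_integral_cong_AE) (auto elim!: eventually_mono)
  also have "\<dots> = ennreal (1/2) * sqnorm (\<lambda>y. f y + u y)" using sqnorm_dilate[OF fum, of 2] by simp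
  finally have "2 * sqnorm u = 2 * (ennreal (1/2) * sqnorm (\<lambda>y. f y + u y))" by simp
  then have "2 * sqnorm u = sqnorm (\<lambda>y. f y + u y)"
    by (simp only: mult.left_commute[of 2 "ennreal (1/2)"] ennreal_half_double)
  then have "sqnorm (\<lambda>x. f x - u x) + 2 * sqnorm u = 2 * sqnorm f + 2 * sqnorm u"
    using sqnorm_parallelogram[OF fm um] by simp
  moreover have "2 * sqnorm u \<noteq> top" using Nu by (simp add: ennreal_mult_eq_top_iff)
  ultimately have "sqnorm (\<lambda>x. f x - u x) = 2 * sqnorm f"
    by (metis ennreal_add_left_cancel add.commute infinity_ennreal_def)
  then show ?thesis unfolding u_def .
qed


lemma sqrt2_nonzero: "sqrt2 \<noteq> 0" by (simp add: sqrt2_def)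

lemma sqrt2_square: "sqrt2 * sqrt2 = 2" unfolding sqrt2_def by (simp flip: of_real_mult)

lemma sqrt2_cancel: "inverse sqrt2 * (2 * z) / sqrt2 = z"
proof -
  have "inverse sqrt2 * (2 * z) / sqrt2 = 2 * z / (sqrt2 * sqrt2)"
    using sqrt2_nonzero by (simp add: field_simps)
  then show ?thesis by (simp add: sqrt2_square)
qed

text \<open>U is measurable and norm preserving on L^2: by the isometry identity
  \<parallel>U f\<parallel>^2 = \<parallel>f - S f\<parallel>^2 / 2 = \<parallel>f\<parallel>^2.\<close>
lemma Uop_measurable:
  assumes "restrict0 f \<in> borel_measurable lebesgue"
  shows "Uop f \<in> borel_measurable lebesgue"
  using assms dil_series_measurable[OF assms] unfolding Uop_def[abs_def] by measurable

lemma sqnorm_Uop: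
  assumes fm: "restrict0 f \<in> borel_measurable lebesgue" and Nf: "sqnorm f < top"
  shows "sqnorm (Uop f) = sqnorm f"
proof -
  have Nf0: "sqnorm (restrict0 f) < top" using Nf by (simp add: sqnorm_restrict0)
  have m: "(\<lambda>x. restrict0 f x - up_series (restrict0 f) x) \<in> borel_measurable lebesgue"
    using fm dil_series_measurable[OF fm] by measurable
  have "Uop f = (\<lambda>x. inverse sqrt2 * (restrict0 f x - up_series (restrict0 f) x))"
    unfolding Uop_def by (simp add: fun_eq_iff field_simps)
  then have "sqnorm (Uop f) = ennreal (1/2) * (2 * sqnorm (restrict0 f))"
    using sqnorm_cmult[OF m, of "inverse sqrt2"] sqnorm_id_minus_up[OF fm Nf0]
    by (simp add: sqrt2_def norm_inverse power_inverse)
  then show ?thesis by (simp only: ennreal_half_double sqnorm_restrict0)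
qed

lemma Uop_L2: "L2 f \<Longrightarrow> L2 (Uop f)"
  using sqnorm_Uop Uop_measurable measurable_restrict0 by (simp add: L2_iff)

lemma Uop_norm: "L2 f \<Longrightarrow> L2norm (Uop f) = L2norm f"
  using Uop_L2 sqnorm_Uop by (simp add: L2_iff L2norm_eq)

lemma L2_up_series_summable:
  assumes "L2 f"
  shows "AE x in lebesgue. x \<ge> 0 \<longrightarrow> summable (\<lambda>k. cmod (1 * restrict0 f (2 ^ Suc k * x)))"
  using assms up_series_L2[of "restrict0 f"] by (simp add: L2_iff sqnorm_restrict0)

text \<open>U is linear up to null sets, since S is linear where the series converge absolutely.\<close>
lemma Uop_add:
  assumes "L2 f" "L2 g"
  shows "ae_eq (Uop (\<lambda>x. f x + g x)) (\<lambda>x. Uop f x + Uop g x)"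
proof -
  have restr: "restrict0 (\<lambda>x. f x + g x) = (\<lambda>x. restrict0 f x + restrict0 g x)"
    by (simp add: restrict0_def fun_eq_iff scaleR_add_right)
  show ?thesis unfolding ae_eq_def
    using L2_up_series_summable[OF assms(1)] L2_up_series_summable[OF assms(2)]
  proof eventually_elim
    case (elim x)
    show ?case
    proof
      assume "x \<in> {0..}"
      then have "summable (\<lambda>k. cmod (1 * restrict0 f (2 ^ Suc k * x)))"
        and "summable (\<lambda>k. cmod (1 * restrict0 g (2 ^ Suc k * x)))" using elim by auto
      then have "up_series (\<lambda>y. restrict0 f y + restrict0 g y) x
          = up_series (restrict0 f) x + up_series (restrict0 g) x"
        by (rule dil_series_add)
      then show "Uop (\<lambda>x. f x + g x) x = Uop f x + Uop g x"
        unfolding Uop_def restr using sqrt2_nonzero by (simp add: field_simps)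
    qed
  qed
qed

lemma Uop_cmult:
  assumes "L2 f"
  shows "ae_eq (Uop (\<lambda>x. c * f x)) (\<lambda>x. c * Uop f x)"
proof -
  have restr: "restrict0 (\<lambda>x. c * f x) = (\<lambda>x. c * restrict0 f x)"
    by (simp add: restrict0_def fun_eq_iff mult_scaleR_right)
  show ?thesis unfolding ae_eq_def using L2_up_series_summable[OF assms]
  proof eventually_elim
    case (elim x)
    show ?case
    proof
      assume "x \<in> {0..}"
      then have "summable (\<lambda>k. cmod (1 * restrict0 f (2 ^ Suc k * x)))" using elim by auto
      then have "up_series (\<lambda>y. c * restrict0 f y) x = c * up_series (restrict0 f) x"
        by (rule dil_series_cmult)
      then show "Uop (\<lambda>x. c * f x) x = c * Uop f x"
        unfolding Uop_def restr by (simp add: algebra_simps)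
    qed
  qed
qed

text \<open>The candidate preimage f = (g - R g) / \<surd>2 of g: it lies in L^2, and w = -(g + R g) / \<surd>2
  solves the same recurrence w x = f (2x) + w (2x) as S f, hence S f = w.\<close>
lemma up_series_of_preimage:
  assumes gm: "g \<in> borel_measurable lebesgue" and Ng: "sqnorm g < top"
  defines "f \<equiv> \<lambda>x. inverse sqrt2 * (g x - down_series g x)"
  shows "L2 f \<and> (AE x in lebesgue. x \<ge> 0 \<longrightarrow>
    up_series (restrict0 f) x = - inverse sqrt2 * (g x + down_series g x))"
proof -
  define v where "v = down_series g"
  define w where "w x = - inverse sqrt2 * (g x + v x)" for x
  have vm: "v \<in> borel_measurable lebesgue" unfolding v_def by (rule dil_series_measurable[OF gm])
  have Nv: "sqnorm v < top" using down_series_L2[OF gm Ng] unfolding v_def by auto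
  have dm: "(\<lambda>x. g x - v x) \<in> borel_measurable lebesgue"
    and sm: "(\<lambda>x. g x + v x) \<in> borel_measurable lebesgue" using gm vm by measurable
  have fm: "f \<in> borel_measurable lebesgue" and wm: "w \<in> borel_measurable lebesgue"
    unfolding f_def v_def[symmetric] w_def[abs_def] using dm sm by measurable
  have Nf: "sqnorm f < top" unfolding f_def v_def[symmetric]
    by (rule sqnorm_cmult_finite[OF dm sqnorm_add_diff_finite(2)[OF gm vm Ng Nv]])
  have Nw: "sqnorm w < top" unfolding w_def
    by (rule sqnorm_cmult_finite[OF sm sqnorm_add_diff_finite(1)[OF gm vm Ng Nv]])
  have f0m: "restrict0 f \<in> borel_measurable lebesgue" by (rule measurable_restrict0[OF fm])
  have Nf0: "sqnorm (restrict0 f) < top" using Nf by (simp add: sqnorm_restrict0)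
  define u where "u = up_series (restrict0 f)"
  have um: "u \<in> borel_measurable lebesgue" unfolding u_def by (rule dil_series_measurable[OF f0m])
  have Nu: "sqnorm u < top" using up_series_L2[OF f0m Nf0] unfolding u_def by auto
  have rec_u: "AE x in lebesgue. x \<ge> 0 \<longrightarrow> u x = f (2 * x) + u (2 * x)"
    using up_series_rec_ae[OF f0m Nf0] by eventually_elim (simp add: u_def restrict0_nonneg)
  have rec_w: "AE x in lebesgue. x \<ge> 0 \<longrightarrow> w x = f (2 * x) + w (2 * x)"
    using down_series_rec_ae[OF gm Ng]
  proof eventually_elim
    case (elim x)
    show ?case
    proof
      assume "x \<ge> 0"
      have "f (2 * x) + w (2 * x) = - inverse sqrt2 * (2 * v (2 * x))"
        by (simp add: f_def v_def w_def algebra_simps)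
      also have "2 * v (2 * x) = g x + v x" using elim \<open>x \<ge> 0\<close> by (simp add: v_def)
      finally show "w x = f (2 * x) + w (2 * x)" by (simp add: w_def)
    qed
  qed
  have "AE x in lebesgue. x \<ge> 0 \<longrightarrow> u x = w x"
    by (rule recurrence_unique[OF um Nu wm Nw rec_u rec_w])
  moreover have "L2 f" using f0m Nf by (simp add: L2_iff)
  ultimately show ?thesis by (simp add: u_def w_def v_def)
qed

lemma Uop_surj:
  assumes "L2 g"
  shows "\<exists>f. L2 f \<and> ae_eq (Uop f) g"
proof -
  define g0 where "g0 = restrict0 g"
  from assms have g0m: "g0 \<in> borel_measurable lebesgue" and Ng0: "sqnorm g0 < top"
    by (auto simp: L2_iff sqnorm_restrict0 g0_def)
  define f where "f x = inverse sqrt2 * (g0 x - down_series g0 x)" for x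
  have L2f: "L2 f"
    and up: "AE x in lebesgue. x \<ge> 0 \<longrightarrow>
      up_series (restrict0 f) x = - inverse sqrt2 * (g0 x + down_series g0 x)"
    using up_series_of_preimage[OF g0m Ng0] unfolding f_def[abs_def] by auto
  have "ae_eq (Uop f) g"
    unfolding ae_eq_def using up
  proof eventually_elim
    case (elim x)
    show ?case
    proof
      assume "x \<in> {0..}"
      then have x: "x \<ge> 0" by simp
      then have "Uop f x = inverse sqrt2 * (2 * g0 x) / sqrt2"
        using elim by (simp add: Uop_def restrict0_nonneg f_def algebra_simps)
      then show "Uop f x = g x" using x by (simp add: sqrt2_cancel g0_def restrict0_nonneg)
    qed
  qed
  with L2f show ?thesis by blast
qed

lemma unitary_Uop: "unitary_L2 Uop"
  unfolding unitary_L2_def using Uop_L2 Uop_add Uop_cmult Uop_surj Uop_norm by blast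


lemma coef_pow: "k \<ge> 1 \<Longrightarrow> coef (2 ^ k) = -1"
proof -
  assume k: "k \<ge> 1"
  then have "(2::nat) ^ k \<noteq> 1" using one_less_power[of "2::nat" k] by linarith
  then show ?thesis unfolding coef_def using k by auto
qed

lemma coef_zero: "(\<And>k. n \<noteq> 2 ^ k) \<Longrightarrow> coef n = 0"
proof -
  assume h: "\<And>k. n \<noteq> 2 ^ k"
  then have "n \<noteq> 1" using h[of 0] by simp
  then show ?thesis using h unfolding coef_def by auto
qed

text \<open>A C_0(0,\<infinity>) function vanishes on some (-\<infinity>, m) with m > 0, hence is continuous on all of R.\<close>
lemma C0pos_continuous:
  assumes "C0pos f"
  shows "continuous_on UNIV f"
proof -
  obtain K where cont: "continuous_on {0<..} f" and K: "compact K" "K \<subseteq> {0<..}"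
    and out: "\<And>x. x \<notin> K \<Longrightarrow> f x = 0"
    using assms unfolding C0pos_def by blast
  obtain m :: real where m: "m > 0" "\<And>x. x \<in> K \<Longrightarrow> m \<le> x"
  proof (cases "K = {}")
    case True then show ?thesis using that[of 1] by auto
  next
    case False
    then obtain s where "s \<in> K" "\<forall>t\<in>K. s \<le> t" using compact_attains_inf[OF K(1)] by blast
    then show ?thesis using that[of s] K(2) by auto
  qed
  have "continuous_on {..<m} f"
    by (rule continuous_on_eq[OF continuous_on_const[of "{..<m}" 0]])
       (use m(2) out in \<open>force\<close>)
  then have "continuous_on ({0<..} \<union> {..<m}) f"
    by (intro continuous_on_open_Un) (use cont in auto)
  moreover have "{0<..} \<union> {..<m} = (UNIV :: real set)" using m(1) by auto
  ultimately show ?thesis by simp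
qed

lemma C0pos_props:
  assumes "C0pos f"
  shows "f \<in> borel_measurable lebesgue \<and> sqnorm f < top \<and> f 0 = 0
    \<and> (\<exists>b. \<forall>y. f y \<noteq> 0 \<longrightarrow> y \<le> b)"
proof -
  obtain K where K: "compact K" "K \<subseteq> {0<..}" and out: "\<And>x. x \<notin> K \<Longrightarrow> f x = 0"
    using assms unfolding C0pos_def by blast
  have cU: "continuous_on UNIV f" by (rule C0pos_continuous[OF assms])
  have fm: "f \<in> borel_measurable lebesgue"
    by (rule measurable_completion) (simp add: borel_measurable_continuous_onI[OF cU])
  obtain b where b: "\<forall>x\<in>K. \<bar>x\<bar> \<le> b" using compact_imp_bounded[OF K(1)] by (auto simp: bounded_real)
  have "bounded (f ` K)"
    by (intro compact_imp_bounded compact_continuous_image continuous_on_subset[OF cU] K(1)) simp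
  then obtain M where M: "\<forall>z\<in>f ` K. norm z \<le> M" unfolding bounded_iff by blast
  have Kl: "K \<in> fmeasurable lebesgue" using lmeasurable_compact[OF K(1)] .
  have "sqnorm f \<le> (\<integral>\<^sup>+x. ennreal (M\<^sup>2) * indicator K x \<partial>lebesgue)"
    unfolding sqnorm_def
  proof (intro nn_integral_mono)
    fix x
    show "ennreal (indicator {0..} x * (cmod (f x))\<^sup>2) \<le> ennreal (M\<^sup>2) * indicator K x"
    proof (cases "x \<in> K")
      case True
      then have "(cmod (f x))\<^sup>2 \<le> M\<^sup>2" using M by (intro power_mono) auto
      then show ?thesis using True by (simp add: ennreal_leI indicator_def)
    qed (simp add: out)
  qed
  also have "\<dots> = ennreal (M\<^sup>2) * emeasure lebesgue K"
    by (rule nn_integral_cmult_indicator) (use Kl in auto)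
  also have "\<dots> < top" using fmeasurableD2[OF Kl] by (simp add: ennreal_mult_less_top less_top)
  finally have "sqnorm f < top" .
  moreover have "f 0 = 0" using out K(2) by auto
  moreover have "\<forall>y. f y \<noteq> 0 \<longrightarrow> y \<le> b" using b out by force
  ultimately show ?thesis using fm by blast
qed

lemma C0pos_up_terms_finite:
  assumes "C0pos f" "x \<ge> 0"
  obtains n where "\<And>k. k \<ge> n \<Longrightarrow> f (2 ^ Suc k * x) = 0"
proof (cases "x = 0")
  case True then show ?thesis using that[of 0] C0pos_props[OF assms(1)] by simp
next
  case False
  then have xp: "x > 0" using assms(2) by simp
  obtain b where b: "\<forall>y. f y \<noteq> 0 \<longrightarrow> y \<le> b" using C0pos_props[OF assms(1)] by blast
  obtain n where n: "b / x < 2 ^ n" using real_arch_pow[of "2::real" "b / x"] by auto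
  show ?thesis
  proof (rule that[of n])
    fix k assume "k \<ge> n"
    then have "(2::real) ^ n \<le> 2 ^ Suc k" by (intro power_increasing) auto
    then have "b / x < 2 ^ Suc k" using n by simp
    then have "b < 2 ^ Suc k * x" using xp by (simp add: divide_less_eq)
    then show "f (2 ^ Suc k * x) = 0" using b by force
  qed
qed

text \<open>Since coef vanishes off the powers of 2, a series \<Sum>n coef (n+1) h (n+1) is the series
  \<Sum>k coef (2^k) h (2^k) with zeros inserted.\<close>
lemma coef_sums_powers:
  fixes h :: "nat \<Rightarrow> complex"
  assumes "(\<lambda>k. coef (2 ^ k) * h (2 ^ k)) sums s"
  shows "(\<lambda>n. coef (Suc n) * h (Suc n)) sums s"
proof -
  define g :: "nat \<Rightarrow> nat" where "g k = 2 ^ k - 1" for k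
  have sm: "strict_mono g" unfolding strict_mono_Suc_iff g_def by (auto intro!: diff_less_mono)
  have zero: "coef (Suc n) * h (Suc n) = 0" if "n \<notin> range g" for n
  proof -
    have "Suc n \<noteq> 2 ^ k" for k
    proof
      assume "Suc n = 2 ^ k"
      then have "n = g k" unfolding g_def by simp
      then show False using that by simp
    qed
    then show ?thesis by (simp add: coef_zero)
  qed
  have "(\<lambda>k. coef (Suc (g k)) * h (Suc (g k))) sums s \<longleftrightarrow> (\<lambda>n. coef (Suc n) * h (Suc n)) sums s"
    by (rule sums_mono_reindex[where f = "\<lambda>n. coef (Suc n) * h (Suc n)"]) (use sm zero in auto)
  moreover have "Suc (g k) = 2 ^ k" for k unfolding g_def by simp
  ultimately show ?thesis using assms by simp
qed

text \<open>On [0,\<infinity>), T f = f - S f for f \<in> C_0(0,\<infinity>), the series S f being a finite sum.\<close>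
lemma Top_eq:
  assumes C: "C0pos f" and x: "x \<ge> 0"
  shows "Top f x = f x - up_series f x"
proof -
  obtain n where n: "\<And>k. k \<ge> n \<Longrightarrow> f (2 ^ Suc k * x) = 0"
    using C0pos_up_terms_finite[OF C x] by blast
  have s1: "summable (\<lambda>k. f (2 ^ Suc k * x))"
    and s2: "summable (\<lambda>k. cmod (1 * f (2 ^ Suc k * x)))"
    by (rule summable_finite[of "{..<n}"]; use n in auto)+
  define S0 where "S0 = (\<Sum>k. f (2 ^ Suc k * x))"
  define G where "G k = coef (2 ^ k) * f (real (2 ^ k) * x)" for k
  have "(\<lambda>k. f (2 ^ Suc k * x)) sums S0" unfolding S0_def using s1 by (rule summable_sums)
  moreover have "G (Suc k) = - f (2 ^ Suc k * x)" for k
    unfolding G_def by (simp add: coef_pow del: power_Suc)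
  ultimately have "(\<lambda>k. G (Suc k)) sums (- S0)" by (simp add: sums_minus)
  moreover have "G 0 = f x" unfolding G_def by (simp add: coef_def)
  ultimately have "G sums (f x - S0)" by (simp add: sums_Suc_iff)
  then have "(\<lambda>n. coef (Suc n) * f (real (Suc n) * x)) sums (f x - S0)"
    using coef_sums_powers[of "\<lambda>n. f (real n * x)"] unfolding G_def by simp
  then have "Top f x = f x - S0" unfolding Top_def by (simp add: sums_iff)
  moreover have "up_series f x = S0" using s2 unfolding dil_series_def S0_def by simp
  ultimately show ?thesis by simp
qed

lemma Top_Uop:
  assumes "C0pos f" "x \<ge> 0"
  shows "Top f x = sqrt2 * Uop f x"
proof -
  have "up_series (restrict0 f) x = up_series f x"
    by (rule dil_series_cong_nonneg) (use assms(2) in \<open>simp_all add: restrict0_nonneg\<close>)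
  then have "Uop f x = (f x - up_series f x) / sqrt2"
    unfolding Uop_def using assms(2) by (simp add: restrict0_nonneg)
  then show ?thesis using Top_eq[OF assms] sqrt2_nonzero by simp
qed


lemma Top_norm:
  assumes C: "C0pos f"
  shows "L2norm (Top f) = sqrt 2 * L2norm f"
proof -
  have fm: "f \<in> borel_measurable lebesgue" and Nf: "sqnorm f < top"
    using C0pos_props[OF C] by auto
  have f0m: "restrict0 f \<in> borel_measurable lebesgue" by (rule measurable_restrict0[OF fm])
  have Um: "Uop f \<in> borel_measurable lebesgue" by (rule Uop_measurable[OF f0m])
  have "L2norm (Top f) = L2norm (\<lambda>x. sqrt2 * Uop f x)"
    by (rule L2norm_cong) (simp add: Top_Uop[OF C])
  also have "\<dots> = sqrt (enn2real (sqnorm (\<lambda>x. sqrt2 * Uop f x)))"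
    by (rule L2norm_eq) (use Um in \<open>simp add: measurable_restrict0\<close>)
  also have "sqnorm (\<lambda>x. sqrt2 * Uop f x) = ennreal 2 * sqnorm f"
    by (simp add: sqnorm_cmult[OF Um] sqnorm_Uop[OF f0m Nf] sqrt2_def)
  finally show ?thesis by (simp add: enn2real_mult L2norm_eq[OF f0m] real_sqrt_mult)
qed


theorem mainTheorem10:
  shows "(\<forall>f. C0pos f \<longrightarrow> L2norm (Top f) = sqrt 2 * L2norm f) \<and>
         (\<exists>U. unitary_L2 U \<and>
              (\<forall>f. C0pos f \<longrightarrow> ae_eq (Top f) (\<lambda>x. complex_of_real (sqrt 2) * U f x)))"
proof -
  have "ae_eq (Top f) (\<lambda>x. complex_of_real (sqrt 2) * Uop f x)" if "C0pos f" for f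
    unfolding ae_eq_def using Top_Uop[OF that] by (auto simp: sqrt2_def intro!: AE_I2)
  then show ?thesis using Top_norm unitary_Uop by blast
qed

end
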